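(* In the setting described in the context, suppose C(v), C(vi) and (U) hold. Then for any sequence of random variables $\{\alpha_n\}$ with $\alpha_n\xrightarrow{P}\alpha$ as $n\to\infty$, $d_H\big(D_n(\alpha_n\mid\mathbf{x}),D(\alpha\mid\mathbf{x})\big)\xrightarrow{P}0$ as $n\to\infty$.
   Context: Setting: $\mathbf{Y}$ is a random vector in $\mathbb{R}^p$ and $\mathbf{X}$ a random element of a complete separable metric space $\mathcal{C}$; $(\mathbf{X}_i,\mathbf{Y}_i)$ are i.i.d. copies; $\mu(\cdot\mid\mathbf{x})$ is the conditional distribution of $\mathbf{Y}$ given $\mathbf{X}=\mathbf{x}$ for a fixed $\mathbf{x}$, and $\mu_n(B\mid\mathbf{x})=\sum_{i=1}^nI(\mathbf{Y}_i\in B)W_{i,n}(\mathbf{x})$ with nonnegative weights summing to $1$ that are measurable functions of $\mathbf{X}_1,\dots,\mathbf{X}_n$. $\rho(\cdot\mid\mathbf{x})$ is a uniformly bounded conditional depth function associated with $\mu(\cdot\mid\mathbf{x})$, $\rho_n(\cdot\mid\mathbf{x})$ its sample version defined from $\mu_n(\cdot\mid\mathbf{x})$; $D(\alpha\mid\mathbf{x})=\{\mathbf{y}:\rho(\mathbf{y}\mid\mathbf{x})\ge\alpha\}$, $D_n(\alpha\mid\mathbf{x})=\{\mathbf{y}:\rho_n(\mathbf{y}\mid\mathbf{x})\ge\alpha\}$. A conditional median $\mathbf{m}(\mathbf{x})$ maximizes $\rho(\cdot\mid\mathbf{x})$. $d_H(A,B)=\inf\{\epsilon:A\subseteq B^\epsilon,B\subseteq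 A^\epsilon\}$ is the Hausdorff distance, $A^\epsilon$ the $\epsilon$-neighborhood of $A$. Conditions: (U) $\sup_{\mathbf{y}}|\rho_n(\mathbf{y}\mid\mathbf{x})-\rho(\mathbf{y}\mid\mathbf{x})|\xrightarrow{P}0$. C(v): $\rho(\cdot\mid\mathbf{x})$ is continuous and $\rho(\mathbf{y}\mid\mathbf{x})\to0$ as $\|\mathbf{y}\|\to\infty$. C(vi): for any $0<\alpha<\rho(\mathbf{m}(\mathbf{x})\mid\mathbf{x})$, the closure of $\{\mathbf{y}:\rho(\mathbf{y}\mid\mathbf{x})>\alpha\}$ equals $D(\alpha\mid\mathbf{x})$. *)

theory Defs
  imports "HOL-Probability.Probability"
begin

definition eps_nbhd :: "'a::metric_space set \<Rightarrow> real \<Rightarrow> 'a set" where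
  "eps_nbhd A e = {y. \<exists>a\<in>A. dist y a \<le> e}"

text \<open>Hausdorff distance d_H(A,B) = inf {e : A within e-nbhd of B, B within e-nbhd of A},
  valued in the extended reals (inf of the empty set is +infinity).\<close>
definition haus_dist :: "'a::metric_space set \<Rightarrow> 'a set \<Rightarrow> ereal" where
  "haus_dist A B = Inf {ereal e | e. e > 0 \<and> A \<subseteq> eps_nbhd B e \<and> B \<subseteq> eps_nbhd A e}"

definition depth_region :: "('a \<Rightarrow> real) \<Rightarrow> real \<Rightarrow> 'a set" where
  "depth_region rho a = {y. rho y \<ge> a}"

definition outer_prob :: "'w measure \<Rightarrow> 'w set \<Rightarrow> real" where
  "outer_prob M S = Inf {measure M A | A. A \<in> sets M \<and> S \<inter> space M \<subseteq> A}"

definition conv_in_prob :: "'w measure \<Rightarrow> (nat \<Rightarrow> 'w \<Rightarrow> 'b::metric_space) \<Rightarrow> ('w \<Rightarrow> 'b) \<Rightarrow> bool" where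
  "conv_in_prob M Z Z0 \<longleftrightarrow>
     (\<forall>e>0. (\<lambda>n. outer_prob M {w \<in> space M. dist (Z n w) (Z0 w) > e}) \<longlonglongrightarrow> 0)"

end

theory Submission
  imports Defs
begin

text \<open>
  The level set \<open>D(\<alpha>)\<close> is compact, because \<open>\<rho>\<close> is continuous and vanishes at infinity.
  Compactness makes \<open>D(\<alpha>)\<close> depend continuously on the level in the Hausdorff metric:
  the slightly lower level sets \<open>D(\<alpha> - \<eta>)\<close> stay inside an \<open>\<epsilon>\<close>-neighbourhood of \<open>D(\<alpha>)\<close>,
  and by C(vi) finitely many points of \<open>{\<rho> > \<alpha>}\<close>, hence of some \<open>D(\<alpha> + \<gamma>)\<close>, are
  \<open>\<epsilon>\<close>-dense in \<open>D(\<alpha>)\<close>. A uniform perturbation of \<open>\<rho>\<close> and \<open>\<alpha>\<close> by at most \<open>\<delta>\<close> moves the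
  sample level set between \<open>D(\<alpha> + 2\<delta>)\<close> and \<open>D(\<alpha> - 2\<delta>)\<close>, so
  \<open>d\<^sub>H(D\<^sub>n(\<alpha>\<^sub>n), D(\<alpha>)) > \<epsilon>\<close> forces \<open>sup |\<rho>\<^sub>n - \<rho>| > \<delta>\<close> or \<open>|\<alpha>\<^sub>n - \<alpha>| > \<delta>\<close>; both events
  have vanishing outer probability, and outer probability is subadditive.
\<close>

lemma outer_prob_nonneg: "0 \<le> outer_prob M S"
  unfolding outer_prob_def
  by (rule cInf_greatest) (auto intro!: exI[of _ "space M"])

lemma outer_prob_le_measure:
  assumes "A \<in> sets M" "S \<inter> space M \<subseteq> A"
  shows "outer_prob M S \<le> measure M A"
  unfolding outer_prob_def using assms
  by (intro cInf_lower bdd_belowI[of _ 0]) auto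

lemma outer_prob_mono:
  assumes "S \<subseteq> T"
  shows "outer_prob M S \<le> outer_prob M T"
  unfolding outer_prob_def[of M T]
  by (rule cInf_greatest) (use assms in \<open>auto intro!: exI[of _ "space M"] outer_prob_le_measure\<close>)

lemma outer_prob_Un_le:
  assumes "prob_space M"
  shows "outer_prob M (S \<union> T) \<le> outer_prob M S + outer_prob M T"
proof -
  interpret prob_space M by fact
  have covers_nonempty: "{measure M A |A. A \<in> sets M \<and> X \<inter> space M \<subseteq> A} \<noteq> {}" for X
    by (auto intro!: exI[of _ "space M"])
  have "outer_prob M (S \<union> T) - measure M A \<le> measure M B"
    if A: "A \<in> sets M" "S \<inter> space M \<subseteq> A" and B: "B \<in> sets M" "T \<inter> space M \<subseteq> B" for A B
  proof -
    have "outer_prob M (S \<union> T) \<le> measure M (A \<union> B)"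
      using A B by (intro outer_prob_le_measure) auto
    also have "\<dots> \<le> measure M A + measure M B"
      using A B by (intro measure_subadditive) auto
    finally show ?thesis by simp
  qed
  then have "outer_prob M (S \<union> T) - measure M A \<le> outer_prob M T"
    if "A \<in> sets M" "S \<inter> space M \<subseteq> A" for A
    using that unfolding outer_prob_def[of M T]
    by (intro cInf_greatest[OF covers_nonempty]) blast
  then have "outer_prob M (S \<union> T) - outer_prob M T \<le> outer_prob M S"
    unfolding outer_prob_def[of M S]
    by (intro cInf_greatest[OF covers_nonempty]) force
  then show ?thesis by simp
qed

lemma outer_prob_tendsto_zero_if_subset_Un:
  assumes "prob_space M"
    and "\<And>n. S n \<subseteq> T n \<union> U n"
    and "(\<lambda>n. outer_prob M (T n)) \<longlonglongrightarrow> 0"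
    and "(\<lambda>n. outer_prob M (U n)) \<longlonglongrightarrow> 0"
  shows "(\<lambda>n. outer_prob M (S n)) \<longlonglongrightarrow> 0"
proof (rule tendsto_sandwich[OF _ _ tendsto_const])
  show "(\<lambda>n. outer_prob M (T n) + outer_prob M (U n)) \<longlonglongrightarrow> 0"
    using tendsto_add[OF assms(3,4)] by simp
  show "\<forall>\<^sub>F n in sequentially. outer_prob M (S n) \<le> outer_prob M (T n) + outer_prob M (U n)"
    using order_trans[OF outer_prob_mono[OF assms(2)] outer_prob_Un_le[OF assms(1)]] by simp
qed (simp add: outer_prob_nonneg)

lemma eps_nbhd_mono: "A \<subseteq> B \<Longrightarrow> eps_nbhd A e \<subseteq> eps_nbhd B e"
  unfolding eps_nbhd_def by blast

lemma haus_dist_le: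
  assumes "e > 0" "A \<subseteq> eps_nbhd B e" "B \<subseteq> eps_nbhd A e"
  shows "haus_dist A B \<le> ereal e"
  unfolding haus_dist_def using assms by (intro Inf_lower) auto

lemma depth_region_shift_subset:
  assumes "\<And>y. rho y \<le> rho' y + c"
  shows "depth_region rho a \<subseteq> depth_region rho' (a - c)"
  using assms unfolding depth_region_def by (smt (verit) mem_Collect_eq subsetI)

lemma depth_region_antimono: "a \<le> b \<Longrightarrow> depth_region rho b \<subseteq> depth_region rho a"
  unfolding depth_region_def by auto

lemma closed_depth_region: "continuous_on UNIV rho \<Longrightarrow> closed (depth_region rho a)"
  unfolding depth_region_def by (intro closed_Collect_le continuous_intros) auto

lemma compact_depth_region:
  fixes rho :: "'a::{real_normed_vector, heine_borel} \<Rightarrow> real"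
  assumes "continuous_on UNIV rho" "(rho \<longlongrightarrow> 0) at_infinity" "0 < a"
  shows "compact (depth_region rho a)"
proof -
  obtain b where b: "\<And>y. b \<le> norm y \<Longrightarrow> \<bar>rho y\<bar> < a"
    using assms(2,3) unfolding tendsto_iff eventually_at_infinity by force
  have "bounded (depth_region rho a)"
    unfolding bounded_iff depth_region_def
    by (intro exI[of _ b] ballI) (smt (verit) b mem_Collect_eq)
  then show ?thesis
    using closed_depth_region[OF assms(1)] compact_eq_bounded_closed by blast
qed

lemma lower_depth_region_subset_eps_nbhd:
  fixes rho :: "'a::{real_normed_vector, heine_borel} \<Rightarrow> real"
  assumes cont: "continuous_on UNIV rho" and tail: "(rho \<longlongrightarrow> 0) at_infinity"
    and "0 < a" "depth_region rho a \<noteq> {}" "e > 0"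
  shows "\<exists>\<eta>>0. depth_region rho (a - \<eta>) \<subseteq> eps_nbhd (depth_region rho a) e"
proof -
  define D where "D = depth_region rho a"
  \<comment> \<open>The points of \<open>D(a/2)\<close> at distance \<open>\<ge> e\<close> from \<open>D\<close> form a compact set on which \<open>\<rho> < a\<close>;
      \<open>\<eta>\<close> is the gap between \<open>a\<close> and the maximum of \<open>\<rho>\<close> there.\<close>
  define K where "K = depth_region rho (a/2) \<inter> {y. e \<le> infdist y D}"
  have "compact K"
    unfolding K_def using compact_depth_region[OF cont tail] \<open>0 < a\<close>
    by (intro compact_Int_closed closed_Collect_le continuous_intros) auto
  have near: "y \<in> eps_nbhd D e" if "y \<in> depth_region rho (a/2)" "y \<notin> K" for y
  proof -
    obtain z where "z \<in> D" "infdist y D = dist y z"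
      using infdist_attains_inf closed_depth_region[OF cont] assms(4) D_def by metis
    then show ?thesis using that by (force simp: K_def eps_nbhd_def)
  qed
  obtain \<eta> where "0 < \<eta>" "\<eta> \<le> a/2" and K_below: "\<And>y. y \<in> K \<Longrightarrow> rho y < a - \<eta>"
  proof (cases "K = {}")
    case True
    then show ?thesis using that[of "a/2"] \<open>0 < a\<close> by auto
  next
    case False
    obtain x where x: "x \<in> K" "\<And>y. y \<in> K \<Longrightarrow> rho y \<le> rho x"
      using continuous_attains_sup[OF \<open>compact K\<close> False continuous_on_subset[OF cont]] by blast
    have "x \<notin> D"
      using x(1) \<open>e > 0\<close> by (auto simp: K_def)
    then have "rho x < a"
      by (simp add: D_def depth_region_def)
    moreover have "0 < rho x"
      using x(1) \<open>0 < a\<close> by (auto simp: K_def depth_region_def)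
    ultimately show ?thesis
      using that[of "(a - rho x)/2"] x(2) by (force simp: field_simps)
  qed
  have "depth_region rho (a - \<eta>) \<subseteq> eps_nbhd D e"
  proof
    fix y assume y: "y \<in> depth_region rho (a - \<eta>)"
    then have "y \<in> depth_region rho (a/2)" "y \<notin> K"
      using \<open>\<eta> \<le> a/2\<close> K_below by (force simp: depth_region_def)+
    then show "y \<in> eps_nbhd D e" by (rule near)
  qed
  then show ?thesis using \<open>0 < \<eta>\<close> D_def by blast
qed

lemma depth_region_subset_eps_nbhd_higher:
  fixes rho :: "'a::metric_space \<Rightarrow> real"
  assumes "compact (depth_region rho a)"
    and "closure {y. rho y > a} = depth_region rho a" and "e > 0"
  shows "\<exists>\<gamma>>0. depth_region rho a \<subseteq> eps_nbhd (depth_region rho (a + \<gamma>)) e"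
proof -
  have "depth_region rho a \<subseteq> (\<Union>z\<in>{z. rho z > a}. ball z e)"
  proof
    fix x assume "x \<in> depth_region rho a"
    then obtain z where "rho z > a" "dist z x < e"
      using assms(2,3) by (metis (no_types, lifting) closure_approachable mem_Collect_eq)
    then show "x \<in> (\<Union>z\<in>{z. rho z > a}. ball z e)" by auto
  qed
  then obtain F where F: "F \<subseteq> {z. rho z > a}" "finite F" "depth_region rho a \<subseteq> (\<Union>z\<in>F. ball z e)"
    using compactE_image[OF assms(1)] by (metis open_ball)
  define \<gamma> where "\<gamma> = Min (insert 1 ((\<lambda>z. rho z - a) ` F))"
  have "\<gamma> > 0" unfolding \<gamma>_def using F by (subst Min_gr_iff) auto
  have "\<gamma> \<le> rho z - a" if "z \<in> F" for z
    unfolding \<gamma>_def using F(2) that by (intro Min_le) auto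
  then have "F \<subseteq> depth_region rho (a + \<gamma>)"
    unfolding depth_region_def by fastforce
  have "depth_region rho a \<subseteq> eps_nbhd F e"
  proof
    fix x assume "x \<in> depth_region rho a"
    then obtain z where "z \<in> F" "dist x z < e"
      using F(3) by (auto simp: dist_commute)
    then show "x \<in> eps_nbhd F e" unfolding eps_nbhd_def by (auto intro!: bexI[of _ z])
  qed
  also have "\<dots> \<subseteq> eps_nbhd (depth_region rho (a + \<gamma>)) e"
    by (rule eps_nbhd_mono) fact
  finally show ?thesis using \<open>\<gamma> > 0\<close> by blast
qed

lemma depth_region_haus_dist_stable:
  fixes rho :: "'a::{real_normed_vector, heine_borel} \<Rightarrow> real"
  assumes cont: "continuous_on UNIV rho" and tail: "(rho \<longlongrightarrow> 0) at_infinity"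
    and "0 < a" "depth_region rho a \<noteq> {}"
    and dense: "closure {y. rho y > a} = depth_region rho a" and "e > 0"
  shows "\<exists>\<delta>>0. \<forall>rho' a'. (\<forall>y. \<bar>rho' y - rho y\<bar> \<le> \<delta>) \<longrightarrow> \<bar>a' - a\<bar> \<le> \<delta> \<longrightarrow>
           haus_dist (depth_region rho' a') (depth_region rho a) \<le> ereal e"
proof -
  obtain \<eta> where "\<eta> > 0" and below: "depth_region rho (a - \<eta>) \<subseteq> eps_nbhd (depth_region rho a) e"
    using lower_depth_region_subset_eps_nbhd[OF cont tail assms(3,4,6)] by blast
  obtain \<gamma> where "\<gamma> > 0" and above: "depth_region rho a \<subseteq> eps_nbhd (depth_region rho (a + \<gamma>)) e"
    using depth_region_subset_eps_nbhd_higher[OF compact_depth_region[OF cont tail \<open>0 < a\<close>] dense \<open>e > 0\<close>]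
    by blast
  define \<delta> where "\<delta> = min (\<eta>/2) (\<gamma>/2)"
  have "haus_dist (depth_region rho' a') (depth_region rho a) \<le> ereal e"
    if close: "\<forall>y. \<bar>rho' y - rho y\<bar> \<le> \<delta>" "\<bar>a' - a\<bar> \<le> \<delta>" for rho' a'
  proof (rule haus_dist_le[OF \<open>e > 0\<close>])
    have "rho' y \<le> rho y + \<delta>" "rho y \<le> rho' y + \<delta>" for y
      using close(1)[rule_format, of y] by (simp_all add: abs_le_iff)
    note shift = depth_region_shift_subset[of rho' rho, OF this(1)]
      depth_region_shift_subset[of rho rho', OF this(2)]
    have levels: "a - \<eta> \<le> a' - \<delta>" "a' \<le> a + \<gamma> - \<delta>"
      using close(2) min.cobounded1[of "\<eta>/2" "\<gamma>/2"] min.cobounded2[of "\<eta>/2" "\<gamma>/2"]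
      unfolding \<delta>_def abs_le_iff by linarith+
    have "depth_region rho' a' \<subseteq> depth_region rho (a' - \<delta>)" by (rule shift(1))
    also have "\<dots> \<subseteq> depth_region rho (a - \<eta>)" by (rule depth_region_antimono) (fact levels(1))
    also note below
    finally show "depth_region rho' a' \<subseteq> eps_nbhd (depth_region rho a) e" .
    have "depth_region rho (a + \<gamma>) \<subseteq> depth_region rho' (a + \<gamma> - \<delta>)" by (rule shift(2))
    also have "\<dots> \<subseteq> depth_region rho' a'" by (rule depth_region_antimono) (fact levels(2))
    finally have "eps_nbhd (depth_region rho (a + \<gamma>)) e \<subseteq> eps_nbhd (depth_region rho' a') e"
      by (rule eps_nbhd_mono)
    with above show "depth_region rho a \<subseteq> eps_nbhd (depth_region rho' a') e"
      by (rule order_trans)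
  qed
  moreover have "\<delta> > 0" using \<open>\<eta> > 0\<close> \<open>\<gamma> > 0\<close> by (simp add: \<delta>_def)
  ultimately show ?thesis by blast
qed

theorem lemma6:
  fixes M :: "'w measure"
    and rho :: "'a::euclidean_space \<Rightarrow> real"
    and rho_n :: "nat \<Rightarrow> 'w \<Rightarrow> 'a \<Rightarrow> real"
    and m :: 'a
    and alpha_n :: "nat \<Rightarrow> 'w \<Rightarrow> real"
    and alpha :: real
  assumes "prob_space M"
    and bounded_rho: "bounded (range rho)"
    and median: "\<forall>y. rho y \<le> rho m"
    and Cv_cont: "continuous_on UNIV rho"
    and Cv_tail: "(rho \<longlongrightarrow> 0) at_infinity"
    and Cvi: "\<forall>a. 0 < a \<and> a < rho m \<longrightarrow>
                 closure {y. rho y > a} = depth_region rho a"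
    and U: "\<forall>e>0. (\<lambda>n. outer_prob M
              {w \<in> space M. (SUP y. ereal \<bar>rho_n n w y - rho y\<bar>) > ereal e}) \<longlonglongrightarrow> 0"
    and alpha_range: "0 < alpha" "alpha < rho m"
    and alpha_conv: "conv_in_prob M alpha_n (\<lambda>w. alpha)"
  shows "\<forall>e>0. (\<lambda>n. outer_prob M
           {w \<in> space M. haus_dist (depth_region (rho_n n w) (alpha_n n w))
                                    (depth_region rho alpha) > ereal e}) \<longlonglongrightarrow> 0"
proof (intro allI impI)
  fix e :: real assume "e > 0"
  have "m \<in> depth_region rho alpha"
    using alpha_range by (simp add: depth_region_def)
  then obtain \<delta> where "\<delta> > 0" and stable: "\<And>rho' a'. \<forall>y. \<bar>rho' y - rho y\<bar> \<le> \<delta> \<Longrightarrow> \<bar>a' - alpha\<bar> \<le> \<delta> \<Longrightarrow>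
      haus_dist (depth_region rho' a') (depth_region rho alpha) \<le> ereal e"
    using depth_region_haus_dist_stable[OF Cv_cont Cv_tail alpha_range(1) _ _ \<open>e > 0\<close>] Cvi alpha_range
    by blast
  show "(\<lambda>n. outer_prob M {w \<in> space M. haus_dist (depth_region (rho_n n w) (alpha_n n w))
                                    (depth_region rho alpha) > ereal e}) \<longlonglongrightarrow> 0"
  proof (rule outer_prob_tendsto_zero_if_subset_Un[OF \<open>prob_space M\<close>])
    show "(\<lambda>n. outer_prob M {w \<in> space M. (SUP y. ereal \<bar>rho_n n w y - rho y\<bar>) > ereal \<delta>}) \<longlonglongrightarrow> 0"
      using U \<open>\<delta> > 0\<close> by blast
    show "(\<lambda>n. outer_prob M {w \<in> space M. dist (alpha_n n w) alpha > \<delta>}) \<longlonglongrightarrow> 0"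
      using alpha_conv \<open>\<delta> > 0\<close> by (simp add: conv_in_prob_def)
    show "{w \<in> space M. haus_dist (depth_region (rho_n n w) (alpha_n n w)) (depth_region rho alpha) > ereal e}
      \<subseteq> {w \<in> space M. (SUP y. ereal \<bar>rho_n n w y - rho y\<bar>) > ereal \<delta>}
        \<union> {w \<in> space M. dist (alpha_n n w) alpha > \<delta>}" for n
      using stable[of "rho_n n _" "alpha_n n _"]
      by (force simp: not_less SUP_le_iff dist_real_def)
  qed
qed

end
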